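(* Assume the structure is rigid. Fix $\zeta=(\xi,\eta)\in\Omega$ and let $Z(z,\zeta):=(y-\eta)-i(z)(x-\xi)$, $d\tilde z:=dy-i(z)\,dx$, and $j(\zeta):=\frac{2i(\zeta)+\beta(\zeta)}{\sqrt{\Delta(\zeta)}}\in A_\zeta$. Then \[ \lim_{r\to0^+}\int^{(\zeta)}_{\partial B_r(\zeta)}Z(z,\zeta)^{-1}\,d\tilde z=2\pi\,j(\zeta)\quad\text{in }A_\zeta, \] where $\partial B_r(\zeta)$ is the positively oriented circle of radius $r$.
   Context: Let $\Omega\subset\mathbb R^2$ be open with coordinates $(x,y)$, $\alpha,\beta\in C^1(\Omega,\mathbb R)$ with $\Delta:=4\alpha-\beta^2>0$ on $\Omega$. For $z\in\Omega$ let $A_z:=\mathbb R[X]/(X^2+\beta(z)X+\alpha(z))$ and $i(z)$ the class of $X$, so $i^2+\beta i+\alpha=0$ and $\{1,i(z)\}$ is a real basis; sections $h=u+v\,i$ ($u,v$ real functions) are multiplied fiberwise. The derivatives of the generator are $i_x:=-(\alpha_x+\beta_x i)(2i+\beta)^{-1}$, $i_y:=-(\alpha_y+\beta_y i)(2i+\beta)^{-1}$; the structure is rigid if $i_x+i\,i_y=0$ on $\Omega$. Coefficientwise integral into a fixed fiber: for a section $h=u+v\,i$ and a piecewise $C^1$ curve $\gamma$, using $i^2=-\beta i-\alpha$ one has $h\,d\tilde z=(u\,dy+v\alpha\,dx)+(v\,dy-u\,dx+v\beta\,dx)\,i$, and one defines \[ \int^{(\zeta)}_\gamma h\,d\tilde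 z:=\Bigl(\int_\gamma u\,dy+v\alpha\,dx\Bigr)+\Bigl(\int_\gamma v\,dy-u\,dx+v\beta\,dx\Bigr)\,i(\zeta)\in A_\zeta . \] For $z\neq\zeta$, $Z(z,\zeta)$ is invertible in $A_z$. *)

theory Defs
  imports "HOL-Analysis.Analysis"
begin

text \<open>An element u + v i(z) of the fibre algebra A_z = R[X]/(X^2 + beta(z) X + alpha(z))
  is represented by its coordinate pair (u, v) in the basis {1, i(z)}.
  The fibre structure is given by the numbers a = alpha(z), b = beta(z).\<close>

type_synonym fib = "real \<times> real"

definition amult :: "real \<Rightarrow> real \<Rightarrow> fib \<Rightarrow> fib \<Rightarrow> fib" where
  "amult a b p q = (fst p * fst q - a * snd p * snd q,
                    fst p * snd q + snd p * fst q - b * snd p * snd q)"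

definition ainv :: "real \<Rightarrow> real \<Rightarrow> fib \<Rightarrow> fib" where
  "ainv a b p = (THE w. amult a b p w = (1, 0))"

definition agen :: fib where "agen = (0, 1)"

text \<open>i_x = -(alpha_x + beta_x i)(2i+beta)^{-1}, in the fibre at z.\<close>
definition i_deriv :: "real \<Rightarrow> real \<Rightarrow> real \<Rightarrow> real \<Rightarrow> fib" where
  "i_deriv a b da db = amult a b (- da, - db) (ainv a b (b, 2))"

definition rigid ::
  "(real \<times> real) set \<Rightarrow> (real \<times> real \<Rightarrow> real) \<Rightarrow> (real \<times> real \<Rightarrow> real) \<Rightarrow>
   (real \<times> real \<Rightarrow> real) \<Rightarrow> (real \<times> real \<Rightarrow> real) \<Rightarrow>
   (real \<times> real \<Rightarrow> real) \<Rightarrow> (real \<times> real \<Rightarrow> real) \<Rightarrow> bool" where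
  "rigid \<Omega> \<alpha> \<beta> \<alpha>x \<alpha>y \<beta>x \<beta>y \<longleftrightarrow>
     (\<forall>z\<in>\<Omega>. i_deriv (\<alpha> z) (\<beta> z) (\<alpha>x z) (\<beta>x z)
              + amult (\<alpha> z) (\<beta> z) agen (i_deriv (\<alpha> z) (\<beta> z) (\<alpha>y z) (\<beta>y z)) = (0, 0))"

text \<open>Z(z,zeta) = (y - eta) - i(z)(x - xi), as an element of A_z.\<close>
definition Zfun :: "real \<times> real \<Rightarrow> real \<times> real \<Rightarrow> fib" where
  "Zfun z \<zeta> = (snd z - snd \<zeta>, - (fst z - fst \<zeta>))"

definition circ :: "real \<times> real \<Rightarrow> real \<Rightarrow> real \<Rightarrow> real \<times> real" where
  "circ \<zeta> r t = (fst \<zeta> + r * cos t, snd \<zeta> + r * sin t)"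

text \<open>Coefficientwise integral of a section h = u + v i over the circle, landing in A_zeta
  (returned as coordinates w.r.t. {1, i(zeta)}):
  (int u dy + v alpha dx) + (int v dy - u dx + v beta dx) i(zeta).\<close>
definition circ_int ::
  "(real \<times> real \<Rightarrow> real) \<Rightarrow> (real \<times> real \<Rightarrow> real) \<Rightarrow> real \<times> real \<Rightarrow> real \<Rightarrow>
   (real \<times> real \<Rightarrow> fib) \<Rightarrow> fib" where
  "circ_int \<alpha> \<beta> \<zeta> r h =
     (let x' = (\<lambda>t. - r * sin t); y' = (\<lambda>t. r * cos t);
          u = (\<lambda>t. fst (h (circ \<zeta> r t))); v = (\<lambda>t. snd (h (circ \<zeta> r t)));
          a = (\<lambda>t. \<alpha> (circ \<zeta> r t)); b = (\<lambda>t. \<beta> (circ \<zeta> r t))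
      in (integral {0..2*pi} (\<lambda>t. u t * y' t + v t * a t * x' t),
          integral {0..2*pi} (\<lambda>t. v t * y' t - u t * x' t + v t * b t * x' t)))"

end

theory Submission
  imports Defs
begin

(* In the fibre algebra the inverse of p = p1 + p2 i is its conjugate (p1 - beta p2) - p2 i
   divided by its norm p1^2 - beta p1 p2 + alpha p2^2, which is positive definite since
   4 alpha - beta^2 > 0.  On the circle of radius r, Z = r (sin t, - cos t) and dz~ carries
   another factor r, so both coefficients of the integral are integrals over [0, 2 pi] of
   g(alpha(c_r(t)), beta(c_r(t)), t) for two fixed densities g that are jointly continuous;
   the limit r -> 0 is therefore the integral with alpha, beta frozen at zeta.
   With constant coefficients the norm on the unit circle is
   (sin t + e cos t)^2 + (d cos t)^2 = |d cos t + i (sin t + e cos t)|^2, e = beta/2,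
   d = sqrt Delta / 2.  A continuous argument of this ellipse has derivative d over the norm
   and increases by 2 pi, giving the i-coefficient 4 pi / sqrt Delta; the 1-density is half a
   logarithmic derivative (integral 0) plus beta/2 times the i-density. *)

definition anorm :: "real \<Rightarrow> real \<Rightarrow> fib \<Rightarrow> real" where
  "anorm a b p = (fst p)\<^sup>2 - b * fst p * snd p + a * (snd p)\<^sup>2"

lemma anorm_pos:
  assumes "4 * a - b\<^sup>2 > 0" and "p \<noteq> 0"
  shows "anorm a b p > 0"
proof -
  have "4 * anorm a b p = (2 * fst p - b * snd p)\<^sup>2 + (4 * a - b\<^sup>2) * (snd p)\<^sup>2"
    by (simp add: anorm_def power2_eq_square algebra_simps)
  moreover have "(2 * fst p - b * snd p)\<^sup>2 + (4 * a - b\<^sup>2) * (snd p)\<^sup>2 > 0"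
  proof (cases "snd p = 0")
    case True
    with assms(2) have "fst p \<noteq> 0" by (simp add: prod_eq_iff)
    with True show ?thesis by simp
  next
    case False
    with assms(1) show ?thesis by (simp add: add_nonneg_pos)
  qed
  ultimately show ?thesis by simp
qed

lemma ainv_eq_conj_div_anorm:
  assumes "anorm a b p \<noteq> 0"
  shows "ainv a b p = ((fst p - b * snd p) / anorm a b p, - snd p / anorm a b p)"
  unfolding ainv_def
proof (rule the_equality)
  obtain p1 p2 where p: "p = (p1, p2)" by (cases p)
  define N where "N = anorm a b p"
  have N: "N = p1\<^sup>2 - b * p1 * p2 + a * p2\<^sup>2" and "N \<noteq> 0"
    using assms by (simp_all add: N_def anorm_def p)
  then show "amult a b p ((fst p - b * snd p) / anorm a b p, - snd p / anorm a b p) = (1, 0)"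
    unfolding N_def[symmetric] by (simp add: amult_def p field_simps power2_eq_square)
  fix w
  assume "amult a b p w = (1, 0)"
  then have 1: "p1 * fst w - a * p2 * snd w = 1" and 0: "p1 * snd w + p2 * fst w - b * p2 * snd w = 0"
    by (simp_all add: amult_def p)
  have "N * fst w = (p1 - b * p2) * (p1 * fst w - a * p2 * snd w)
                    + a * p2 * (p1 * snd w + p2 * fst w - b * p2 * snd w)"
       "N * snd w = p1 * (p1 * snd w + p2 * fst w - b * p2 * snd w) - p2 * (p1 * fst w - a * p2 * snd w)"
    by (simp_all add: N algebra_simps power2_eq_square)
  with 1 0 \<open>N \<noteq> 0\<close> show "w = ((fst p - b * snd p) / anorm a b p, - snd p / anorm a b p)"
    unfolding N_def[symmetric] by (simp add: p prod_eq_iff field_simps)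
qed

definition circ_norm :: "real \<Rightarrow> real \<Rightarrow> real \<Rightarrow> real" where
  "circ_norm a b t = (sin t)\<^sup>2 + b * sin t * cos t + a * (cos t)\<^sup>2"

lemma Zfun_circ: "Zfun (circ \<zeta> r t) \<zeta> = (r * sin t, - (r * cos t))"
  by (simp add: Zfun_def circ_def)

lemma anorm_Zfun_circ: "anorm a b (Zfun (circ \<zeta> r t) \<zeta>) = r\<^sup>2 * circ_norm a b t"
  by (simp add: Zfun_circ anorm_def circ_norm_def power2_eq_square algebra_simps)

lemma circ_norm_pos:
  assumes "4 * a - b\<^sup>2 > 0"
  shows "circ_norm a b t > 0"
proof -
  have "(sin t, - cos t) \<noteq> 0"
    by (auto simp: zero_prod_def dest: sin_zero_abs_cos_one)
  with assms have "anorm a b (sin t, - cos t) > 0" by (rule anorm_pos)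
  then show ?thesis by (simp add: anorm_def circ_norm_def)
qed

lemma ainv_Zfun_circ:
  assumes "4 * a - b\<^sup>2 > 0" and "r \<noteq> 0"
  shows "ainv a b (Zfun (circ \<zeta> r t) \<zeta>)
           = ((sin t + b * cos t) / (r * circ_norm a b t), cos t / (r * circ_norm a b t))"
proof -
  have "anorm a b (Zfun (circ \<zeta> r t) \<zeta>) \<noteq> 0" and "circ_norm a b t > 0"
    using assms circ_norm_pos[OF assms(1), of t] by (simp_all add: anorm_Zfun_circ)
  with assms(2) show ?thesis
    unfolding ainv_eq_conj_div_anorm[OF \<open>anorm a b _ \<noteq> 0\<close>] anorm_Zfun_circ
    by (simp add: Zfun_circ field_simps power2_eq_square)
qed

definition coeff_one_density :: "real \<Rightarrow> real \<Rightarrow> real \<Rightarrow> real" where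
  "coeff_one_density a b t = (sin t * cos t + b * (cos t)\<^sup>2 - a * sin t * cos t) / circ_norm a b t"

definition coeff_i_density :: "real \<Rightarrow> real \<Rightarrow> real \<Rightarrow> real" where
  "coeff_i_density a b t = 1 / circ_norm a b t"

lemma Zinv_circ_integrands:
  fixes \<zeta> :: "real \<times> real" and t :: real
  assumes "4 * a - b\<^sup>2 > 0" and "r \<noteq> 0"
  defines "h \<equiv> ainv a b (Zfun (circ \<zeta> r t) \<zeta>)"
  shows "fst h * (r * cos t) + snd h * a * (- r * sin t) = coeff_one_density a b t"
    and "snd h * (r * cos t) - fst h * (- r * sin t) + snd h * b * (- r * sin t)
           = coeff_i_density a b t"
proof -
  have N: "circ_norm a b t > 0" using assms(1) by (rule circ_norm_pos)
  have sc: "(sin t)\<^sup>2 + (cos t)\<^sup>2 = 1" by simp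
  show "fst h * (r * cos t) + snd h * a * (- r * sin t) = coeff_one_density a b t"
    using N assms(2) by (simp add: h_def ainv_Zfun_circ[OF assms(1,2)] coeff_one_density_def
        field_simps power2_eq_square)
  show "snd h * (r * cos t) - fst h * (- r * sin t) + snd h * b * (- r * sin t)
          = coeff_i_density a b t"
    using N assms(2) by (simp add: h_def ainv_Zfun_circ[OF assms(1,2)] coeff_i_density_def
        field_simps) (insert sc, algebra)
qed

lemma circ_int_Zinv:
  assumes "r \<noteq> 0" and "\<And>t. 4 * \<alpha> (circ \<zeta> r t) - (\<beta> (circ \<zeta> r t))\<^sup>2 > 0"
  shows "circ_int \<alpha> \<beta> \<zeta> r (\<lambda>z. ainv (\<alpha> z) (\<beta> z) (Zfun z \<zeta>))
           = (integral {0..2 * pi} (\<lambda>t. coeff_one_density (\<alpha> (circ \<zeta> r t)) (\<beta> (circ \<zeta> r t)) t),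
              integral {0..2 * pi} (\<lambda>t. coeff_i_density (\<alpha> (circ \<zeta> r t)) (\<beta> (circ \<zeta> r t)) t))"
  using Zinv_circ_integrands[OF assms(2) assms(1)] by (simp add: circ_int_def Let_def)

definition ellipse_norm :: "real \<Rightarrow> real \<Rightarrow> real \<Rightarrow> real" where
  "ellipse_norm e d t = (sin t + e * cos t)\<^sup>2 + (d * cos t)\<^sup>2"

(* Up to an additive constant, a continuous branch of the argument of
   d cos t + i (sin t + e cos t), whose squared modulus is ellipse_norm e d t. *)
definition ellipse_arg :: "real \<Rightarrow> real \<Rightarrow> real \<Rightarrow> real" where
  "ellipse_arg e d t = t + arctan ((e * ((cos t)\<^sup>2 - (sin t)\<^sup>2) + (1 - (d\<^sup>2 + e\<^sup>2)) * sin t * cos t)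
                                   / (ellipse_norm e d t + d))"

lemma circ_norm_eq_ellipse_norm: "circ_norm (e\<^sup>2 + d\<^sup>2) (2 * e) t = ellipse_norm e d t"
  by (simp add: circ_norm_def ellipse_norm_def power2_eq_square algebra_simps)

lemma ellipse_norm_pos:
  assumes "d \<noteq> 0"
  shows "ellipse_norm e d t > 0"
proof -
  have "4 * (e\<^sup>2 + d\<^sup>2) - (2 * e)\<^sup>2 > 0"
    using assms by (simp add: power_mult_distrib)
  then show ?thesis
    using circ_norm_pos circ_norm_eq_ellipse_norm by metis
qed

lemma ellipse_norm_deriv:
  "(ellipse_norm e d has_real_derivative
     2 * (sin t + e * cos t) * (cos t - e * sin t) - 2 * d\<^sup>2 * sin t * cos t) (at t)"
  unfolding ellipse_norm_def
  by (auto intro!: derivative_eq_intros simp: power2_eq_square algebra_simps)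

lemma has_real_derivative_arctan_quotient:
  assumes "(f has_real_derivative f') (at t)" and "(g has_real_derivative g') (at t)"
    and "g t \<noteq> 0"
  shows "((\<lambda>t. arctan (f t / g t)) has_real_derivative
           (f' * g t - f t * g') / ((g t)\<^sup>2 + (f t)\<^sup>2)) (at t)"
proof -
  have "((\<lambda>t. arctan (f t / g t)) has_real_derivative
          inverse (1 + (f t / g t)\<^sup>2) * ((f' * g t - f t * g') / (g t * g t))) (at t)"
    by (intro derivative_intros assms)
  moreover have "inverse (1 + (f t / g t)\<^sup>2) * ((f' * g t - f t * g') / (g t * g t))
                   = (f' * g t - f t * g') / ((g t)\<^sup>2 + (f t)\<^sup>2)"
  proof -
    have "(g t)\<^sup>2 + (f t)\<^sup>2 > 0"
      using assms(3) by (simp add: add_pos_nonneg)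
    moreover have "inverse (1 + (f t / g t)\<^sup>2) = (g t)\<^sup>2 / ((g t)\<^sup>2 + (f t)\<^sup>2)"
      using assms(3) by (simp add: field_simps)
    ultimately show ?thesis
      using assms(3) by (simp add: power2_eq_square)
  qed
  ultimately show ?thesis by simp
qed

lemma ellipse_arg_deriv:
  assumes "d > 0"
  shows "(ellipse_arg e d has_real_derivative d / ellipse_norm e d t) (at t)"
proof -
  define s c where "s = sin t" and "c = cos t"
  define N where "N = ellipse_norm e d t"
  define K where "K = e * (c\<^sup>2 - s\<^sup>2) + (1 - (d\<^sup>2 + e\<^sup>2)) * s * c"
  define N' where "N' = 2 * (s + e * c) * (c - e * s) - 2 * d\<^sup>2 * s * c"
  define K' where "K' = - 4 * e * s * c + (1 - (d\<^sup>2 + e\<^sup>2)) * (c\<^sup>2 - s\<^sup>2)"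
  define T where "T = e\<^sup>2 + d\<^sup>2 + 1 + 2 * d"
  have sc: "s\<^sup>2 + c\<^sup>2 = 1" by (simp add: s_def c_def)
  have N: "N = (s + e * c)\<^sup>2 + (d * c)\<^sup>2" by (simp add: N_def s_def c_def ellipse_norm_def)
  have "N > 0" unfolding N_def using assms by (simp add: ellipse_norm_pos)
  have "T > 0" unfolding T_def using assms zero_le_power2[of e] zero_le_power2[of d] by linarith
  have "((\<lambda>t. e * ((cos t)\<^sup>2 - (sin t)\<^sup>2) + (1 - (d\<^sup>2 + e\<^sup>2)) * sin t * cos t)
          has_real_derivative K') (at t)"
    unfolding K'_def s_def c_def
    by (auto intro!: derivative_eq_intros simp: power2_eq_square algebra_simps)
  from has_real_derivative_arctan_quotient[OF this DERIV_add[OF ellipse_norm_deriv DERIV_const]]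
  have "(ellipse_arg e d has_real_derivative 1 + (K' * (N + d) - K * (N' + 0)) / ((N + d)\<^sup>2 + K\<^sup>2))
          (at t)"
    unfolding ellipse_arg_def[abs_def] N_def K_def N'_def s_def c_def
    using \<open>N > 0\<close> assms by (intro derivative_intros) (simp_all add: N_def)
  moreover have "(N + d)\<^sup>2 + K\<^sup>2 = T * N"
    using sc unfolding N K_def T_def by algebra
  moreover have "T * N + (K' * (N + d) - K * N') = d * T"
    using sc unfolding N K_def K'_def N'_def T_def by algebra
  ultimately show ?thesis
    using \<open>N > 0\<close> \<open>T > 0\<close> by (simp add: N_def field_simps)
qed

lemma ellipse_arg_2pi: "ellipse_arg e d (2 * pi) = ellipse_arg e d 0 + 2 * pi"
  by (simp add: ellipse_arg_def ellipse_norm_def)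

lemma ellipse_norm_2pi: "ellipse_norm e d (2 * pi) = ellipse_norm e d 0"
  by (simp add: ellipse_norm_def)

lemma has_integral_inverse_ellipse_norm:
  assumes "d > 0"
  shows "((\<lambda>t. 1 / ellipse_norm e d t) has_integral 2 * pi / d) {0..2 * pi}"
proof -
  have "((\<lambda>t. 1 / ellipse_norm e d t) has_integral
          ellipse_arg e d (2 * pi) / d - ellipse_arg e d 0 / d) {0..2 * pi}"
  proof (rule fundamental_theorem_of_calculus)
    fix t
    have "((\<lambda>t. ellipse_arg e d t / d) has_real_derivative 1 / ellipse_norm e d t) (at t)"
      using DERIV_cdivide[OF ellipse_arg_deriv[OF assms], where c = d] assms by simp
    then show "((\<lambda>t. ellipse_arg e d t / d) has_vector_derivative 1 / ellipse_norm e d t)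
                 (at t within {0..2 * pi})"
      by (simp add: has_real_derivative_iff_has_vector_derivative[symmetric]
          has_field_derivative_at_within)
  qed simp
  then show ?thesis
    using assms unfolding ellipse_arg_2pi by (simp add: diff_divide_distrib[symmetric])
qed

lemma has_integral_ellipse_log_deriv:
  assumes "d \<noteq> 0"
  shows "((\<lambda>t. (2 * (sin t + e * cos t) * (cos t - e * sin t) - 2 * d\<^sup>2 * sin t * cos t)
                / ellipse_norm e d t) has_integral 0) {0..2 * pi}"
proof -
  have "((\<lambda>t. (2 * (sin t + e * cos t) * (cos t - e * sin t) - 2 * d\<^sup>2 * sin t * cos t)
                / ellipse_norm e d t)
          has_integral ln (ellipse_norm e d (2 * pi)) - ln (ellipse_norm e d 0)) {0..2 * pi}"
  proof (rule fundamental_theorem_of_calculus)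
    fix t
    have "((\<lambda>t. ln (ellipse_norm e d t)) has_real_derivative
            (2 * (sin t + e * cos t) * (cos t - e * sin t) - 2 * d\<^sup>2 * sin t * cos t)
              / ellipse_norm e d t) (at t)"
      using DERIV_chain2[OF DERIV_ln_divide[OF ellipse_norm_pos[OF assms]] ellipse_norm_deriv]
      by simp
    then show "((\<lambda>t. ln (ellipse_norm e d t)) has_vector_derivative
                 (2 * (sin t + e * cos t) * (cos t - e * sin t) - 2 * d\<^sup>2 * sin t * cos t)
                   / ellipse_norm e d t) (at t within {0..2 * pi})"
      by (simp add: has_real_derivative_iff_has_vector_derivative[symmetric]
          has_field_derivative_at_within)
  qed simp
  then show ?thesis by (simp add: ellipse_norm_2pi)
qed

lemma discriminant_ellipse_params:
  assumes "4 * a - b\<^sup>2 > 0"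
  obtains e d where "d > 0" and "a = e\<^sup>2 + d\<^sup>2" and "b = 2 * e" and "sqrt (4 * a - b\<^sup>2) = 2 * d"
proof (rule that[of "sqrt (4 * a - b\<^sup>2) / 2" "b / 2"])
  show "a = (b / 2)\<^sup>2 + (sqrt (4 * a - b\<^sup>2) / 2)\<^sup>2"
    using assms by (simp add: power_divide field_simps)
qed (use assms in simp_all)

lemma has_integral_coeff_i_density:
  assumes "4 * a - b\<^sup>2 > 0"
  shows "(coeff_i_density a b has_integral 2 * pi * (2 / sqrt (4 * a - b\<^sup>2))) {0..2 * pi}"
proof -
  obtain e d where "d > 0" and ab: "a = e\<^sup>2 + d\<^sup>2" "b = 2 * e" and sq: "sqrt (4 * a - b\<^sup>2) = 2 * d"
    using assms by (rule discriminant_ellipse_params)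
  have "coeff_i_density a b = (\<lambda>t. 1 / ellipse_norm e d t)"
    by (simp add: fun_eq_iff coeff_i_density_def ab circ_norm_eq_ellipse_norm)
  with has_integral_inverse_ellipse_norm[OF \<open>d > 0\<close>] show ?thesis
    unfolding sq using \<open>d > 0\<close> by simp
qed

lemma has_integral_coeff_one_density:
  assumes "4 * a - b\<^sup>2 > 0"
  shows "(coeff_one_density a b has_integral 2 * pi * (b / sqrt (4 * a - b\<^sup>2))) {0..2 * pi}"
proof -
  obtain e d where "d > 0" and ab: "a = e\<^sup>2 + d\<^sup>2" "b = 2 * e" and sq: "sqrt (4 * a - b\<^sup>2) = 2 * d"
    using assms by (rule discriminant_ellipse_params)
  define N' where "N' t = 2 * (sin t + e * cos t) * (cos t - e * sin t) - 2 * d\<^sup>2 * sin t * cos t"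
    for t
  have "coeff_one_density a b
          = (\<lambda>t. 1 / 2 * (N' t / ellipse_norm e d t) + e * (1 / ellipse_norm e d t))"
  proof
    fix t :: real
    have sc: "(sin t)\<^sup>2 + (cos t)\<^sup>2 = 1" by simp
    have "coeff_one_density a b t
            = (sin t * cos t + 2 * e * (cos t)\<^sup>2 - (e\<^sup>2 + d\<^sup>2) * sin t * cos t) / ellipse_norm e d t"
      by (simp add: coeff_one_density_def ab circ_norm_eq_ellipse_norm)
    also have "sin t * cos t + 2 * e * (cos t)\<^sup>2 - (e\<^sup>2 + d\<^sup>2) * sin t * cos t = N' t / 2 + e"
      using sc unfolding N'_def by algebra
    finally show "coeff_one_density a b t
                    = 1 / 2 * (N' t / ellipse_norm e d t) + e * (1 / ellipse_norm e d t)"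
      by (simp add: add_divide_distrib)
  qed
  moreover have "((\<lambda>t. 1 / 2 * (N' t / ellipse_norm e d t) + e * (1 / ellipse_norm e d t))
                   has_integral 1 / 2 * 0 + e * (2 * pi / d)) {0..2 * pi}"
    unfolding N'_def using \<open>d > 0\<close>
    by (intro has_integral_add has_integral_mult_right has_integral_ellipse_log_deriv
        has_integral_inverse_ellipse_norm) simp_all
  ultimately show ?thesis
    unfolding sq using \<open>d > 0\<close> by (simp add: ab ac_simps)
qed

lemma dist_circ: "dist \<zeta> (circ \<zeta> r t) = \<bar>r\<bar>"
proof -
  obtain x y where "\<zeta> = (x, y)" by (cases \<zeta>)
  then have "dist \<zeta> (circ \<zeta> r t) = sqrt ((r * cos t)\<^sup>2 + (r * sin t)\<^sup>2)"
    by (simp add: circ_def dist_Pair_Pair dist_real_def)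
  also have "(r * cos t)\<^sup>2 + (r * sin t)\<^sup>2 = r\<^sup>2"
    by (simp add: power_mult_distrib flip: distrib_left)
  finally show ?thesis by simp
qed

lemma eventually_circ_in_open:
  assumes "open \<Omega>" and "\<zeta> \<in> \<Omega>"
  shows "\<forall>\<^sub>F r in at 0. \<forall>t. circ \<zeta> r t \<in> \<Omega>"
proof -
  obtain \<epsilon> where "\<epsilon> > 0" and "ball \<zeta> \<epsilon> \<subseteq> \<Omega>"
    using assms open_contains_ball by blast
  then have "circ \<zeta> r t \<in> \<Omega>" if "\<bar>r\<bar> < \<epsilon>" for r t
    using that by (metis dist_circ mem_ball subsetD)
  with \<open>\<epsilon> > 0\<close> show ?thesis
    unfolding eventually_at by (auto intro!: exI[of _ \<epsilon>])
qed

lemma continuous_on_coeff_densities: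
  fixes \<alpha> \<beta> :: "'a::metric_space \<Rightarrow> real"
  assumes "continuous_on S \<alpha>" and "continuous_on S \<beta>"
    and "\<And>z. z \<in> S \<Longrightarrow> 4 * \<alpha> z - (\<beta> z)\<^sup>2 > 0"
  shows "continuous_on (S \<times> UNIV) (\<lambda>(z, t). coeff_one_density (\<alpha> z) (\<beta> z) t)"
    and "continuous_on (S \<times> UNIV) (\<lambda>(z, t). coeff_i_density (\<alpha> z) (\<beta> z) t)"
proof -
  have \<alpha>: "continuous_on (S \<times> UNIV) (\<lambda>p. \<alpha> (fst p))"
    and \<beta>: "continuous_on (S \<times> UNIV) (\<lambda>p. \<beta> (fst p))"
    by (auto intro!: continuous_on_compose2[OF assms(1)] continuous_on_compose2[OF assms(2)]
        continuous_on_fst[OF continuous_on_id])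
  have nz: "circ_norm (\<alpha> (fst p)) (\<beta> (fst p)) (snd p) \<noteq> 0" if "p \<in> S \<times> UNIV" for p
  proof -
    from that have "fst p \<in> S" by auto
    then show ?thesis using circ_norm_pos[OF assms(3)] by (simp add: less_imp_neq[symmetric])
  qed
  show "continuous_on (S \<times> UNIV) (\<lambda>(z, t). coeff_one_density (\<alpha> z) (\<beta> z) t)"
    unfolding case_prod_beta coeff_one_density_def circ_norm_def
    by (intro continuous_intros \<alpha> \<beta>) (use nz in \<open>simp add: circ_norm_def\<close>)
  show "continuous_on (S \<times> UNIV) (\<lambda>(z, t). coeff_i_density (\<alpha> z) (\<beta> z) t)"
    unfolding case_prod_beta coeff_i_density_def circ_norm_def
    by (intro continuous_intros \<alpha> \<beta>) (use nz in \<open>simp add: circ_norm_def\<close>)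
qed

lemma tendsto_integral_circ:
  fixes F :: "real \<times> real \<Rightarrow> real \<Rightarrow> real"
  assumes "open \<Omega>" and "\<zeta> \<in> \<Omega>" and "continuous_on (\<Omega> \<times> UNIV) (\<lambda>(z, t). F z t)"
  shows "((\<lambda>r. integral {0..2 * pi} (\<lambda>t. F (circ \<zeta> r t) t))
            \<longlongrightarrow> integral {0..2 * pi} (F \<zeta>)) (at 0)"
proof -
  obtain \<epsilon> where "\<epsilon> > 0" and "cball \<zeta> \<epsilon> \<subseteq> \<Omega>"
    using assms(1,2) open_contains_cball by blast
  define R where "R = cball (0::real) \<epsilon> \<times> cbox 0 (2 * pi)"
  have "continuous_on R (\<lambda>p. (circ \<zeta> (fst p) (snd p), snd p))"
    unfolding circ_def by (intro continuous_intros)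
  moreover have "(\<lambda>p. (circ \<zeta> (fst p) (snd p), snd p)) ` R \<subseteq> \<Omega> \<times> UNIV"
    by (auto simp: R_def dist_circ intro!: subsetD[OF \<open>cball \<zeta> \<epsilon> \<subseteq> \<Omega>\<close>])
  ultimately have "continuous_on R (\<lambda>p. (\<lambda>(z, t). F z t) (circ \<zeta> (fst p) (snd p), snd p))"
    by (rule continuous_on_compose2[OF assms(3)])
  then have "continuous_on (cball 0 \<epsilon>) (\<lambda>r. integral (cbox 0 (2 * pi)) (\<lambda>t. F (circ \<zeta> r t) t))"
    unfolding R_def by (intro integral_continuous_on_param) (simp add: case_prod_beta)
  moreover have "0 \<in> interior (cball (0::real) \<epsilon>)"
    unfolding mem_interior_cball using \<open>\<epsilon> > 0\<close> by blast
  ultimately have "isCont (\<lambda>r. integral (cbox 0 (2 * pi)) (\<lambda>t. F (circ \<zeta> r t) t)) 0"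
    by (rule continuous_on_interior)
  moreover have "circ \<zeta> 0 t = \<zeta>" for t
    by (simp add: circ_def)
  ultimately show ?thesis
    by (simp add: isCont_def)
qed

lemma tendsto_circ_int_Zinv:
  assumes "open \<Omega>" and "\<zeta> \<in> \<Omega>" and "continuous_on \<Omega> \<alpha>" and "continuous_on \<Omega> \<beta>"
    and disc: "\<And>z. z \<in> \<Omega> \<Longrightarrow> 4 * \<alpha> z - (\<beta> z)\<^sup>2 > 0"
  shows "((\<lambda>r. circ_int \<alpha> \<beta> \<zeta> r (\<lambda>z. ainv (\<alpha> z) (\<beta> z) (Zfun z \<zeta>)))
            \<longlongrightarrow> (2 * pi * (\<beta> \<zeta> / sqrt (4 * \<alpha> \<zeta> - (\<beta> \<zeta>)\<^sup>2)),
                 2 * pi * (2 / sqrt (4 * \<alpha> \<zeta> - (\<beta> \<zeta>)\<^sup>2)))) (at 0)"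
proof -
  note \<Omega> = assms(1,2) and cont = assms(3,4)
  have "((\<lambda>r. integral {0..2 * pi} (\<lambda>t. coeff_one_density (\<alpha> (circ \<zeta> r t)) (\<beta> (circ \<zeta> r t)) t))
          \<longlongrightarrow> 2 * pi * (\<beta> \<zeta> / sqrt (4 * \<alpha> \<zeta> - (\<beta> \<zeta>)\<^sup>2))) (at 0)"
    using tendsto_integral_circ[OF \<Omega> continuous_on_coeff_densities(1)[OF cont disc]]
      has_integral_coeff_one_density[OF disc[OF assms(2)]] by (simp add: integral_unique)
  moreover have "((\<lambda>r. integral {0..2 * pi} (\<lambda>t. coeff_i_density (\<alpha> (circ \<zeta> r t)) (\<beta> (circ \<zeta> r t)) t))
          \<longlongrightarrow> 2 * pi * (2 / sqrt (4 * \<alpha> \<zeta> - (\<beta> \<zeta>)\<^sup>2))) (at 0)"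
    using tendsto_integral_circ[OF \<Omega> continuous_on_coeff_densities(2)[OF cont disc]]
      has_integral_coeff_i_density[OF disc[OF assms(2)]] by (simp add: integral_unique)
  moreover have "\<forall>\<^sub>F r in at 0.
      (integral {0..2 * pi} (\<lambda>t. coeff_one_density (\<alpha> (circ \<zeta> r t)) (\<beta> (circ \<zeta> r t)) t),
       integral {0..2 * pi} (\<lambda>t. coeff_i_density (\<alpha> (circ \<zeta> r t)) (\<beta> (circ \<zeta> r t)) t))
      = circ_int \<alpha> \<beta> \<zeta> r (\<lambda>z. ainv (\<alpha> z) (\<beta> z) (Zfun z \<zeta>))"
    using eventually_circ_in_open[OF \<Omega>] eventually_neq_at_within[where x = 0]
    by eventually_elim (rule circ_int_Zinv[symmetric], assumption, rule disc, blast)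
  ultimately show ?thesis
    by (rule Lim_transform_eventually[OF tendsto_Pair])
qed

theorem lemma5p7:
  fixes \<Omega> :: "(real \<times> real) set"
    and \<alpha> \<beta> \<alpha>x \<alpha>y \<beta>x \<beta>y :: "real \<times> real \<Rightarrow> real"
    and \<zeta> :: "real \<times> real"
  assumes "open \<Omega>"
    and "\<And>z. z \<in> \<Omega> \<Longrightarrow> (\<alpha> has_derivative (\<lambda>(h, k). \<alpha>x z * h + \<alpha>y z * k)) (at z)"
    and "\<And>z. z \<in> \<Omega> \<Longrightarrow> (\<beta> has_derivative (\<lambda>(h, k). \<beta>x z * h + \<beta>y z * k)) (at z)"
    and "continuous_on \<Omega> \<alpha>x" "continuous_on \<Omega> \<alpha>y"
    and "continuous_on \<Omega> \<beta>x" "continuous_on \<Omega> \<beta>y"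
    and "\<And>z. z \<in> \<Omega> \<Longrightarrow> 4 * \<alpha> z - (\<beta> z)\<^sup>2 > 0"
    and "rigid \<Omega> \<alpha> \<beta> \<alpha>x \<alpha>y \<beta>x \<beta>y"
    and "\<zeta> \<in> \<Omega>"
  shows "((\<lambda>r. circ_int \<alpha> \<beta> \<zeta> r (\<lambda>z. ainv (\<alpha> z) (\<beta> z) (Zfun z \<zeta>)))
            \<longlongrightarrow> (2 * pi * (\<beta> \<zeta> / sqrt (4 * \<alpha> \<zeta> - (\<beta> \<zeta>)\<^sup>2)),
                 2 * pi * (2 / sqrt (4 * \<alpha> \<zeta> - (\<beta> \<zeta>)\<^sup>2)))) (at_right 0)"
proof -
  have "continuous_on \<Omega> \<alpha>" and "continuous_on \<Omega> \<beta>"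
    using assms(2,3) by (meson continuous_at_imp_continuous_on has_derivative_continuous)+
  with assms(1,8,10) have "((\<lambda>r. circ_int \<alpha> \<beta> \<zeta> r (\<lambda>z. ainv (\<alpha> z) (\<beta> z) (Zfun z \<zeta>)))
            \<longlongrightarrow> (2 * pi * (\<beta> \<zeta> / sqrt (4 * \<alpha> \<zeta> - (\<beta> \<zeta>)\<^sup>2)),
                 2 * pi * (2 / sqrt (4 * \<alpha> \<zeta> - (\<beta> \<zeta>)\<^sup>2)))) (at 0)"
    by (intro tendsto_circ_int_Zinv)
  then show ?thesis
    by (rule tendsto_within_subset) simp
qed

end
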